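(* Let $R$ be a commutative ring and $n\ge 1$. Then ${\rm E}_{\psi_n}(R)={\rm E}_{2n-1}(R)$.
   Context: All rings are commutative with identity. ${\rm E}_m(R)$ is the subgroup of ${\rm SL}_m(R)$ generated by the elementary matrices $E_{ij}(\lambda)=I_m+\lambda e_{ij}$, $i\ne j$, $\lambda\in R$, where $e_{ij}$ is the matrix unit. $\psi_n=\sum_{i=1}^n e_{2i-1,2i}-\sum_{i=1}^n e_{2i,2i-1}$ is the standard $2n\times 2n$ symplectic (alternating) matrix. Elements of $R^m$ are row vectors, ${}^t$ is transpose. For an invertible alternating $2n\times2n$ matrix $\varphi$ (alternating means of the form $\nu-\nu^t$), write $\varphi=\begin{pmatrix}0&-c\\ c^t&\nu\end{pmatrix}$, $\varphi^{-1}=\begin{pmatrix}0&d\\ -d^t&\mu\end{pmatrix}$ with $c,d\in R^{2n-1}$, and set $\alpha_\varphi(v)=I_{2n-1}+d^tv\nu$, $\beta_\varphi(v)=I_{2n-1}+\mu v^tc$ for $v\in R^{2n-1}$. ${\rm E}_\varphi(R)$ is the subgroup of ${\rm GL}_{2n-1}(R)$ generated by all $\alpha_\varphi(v),\beta_\varphi(v)$, $v\in R^{2n-1}$. *)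

theory Defs
  imports "Jordan_Normal_Form.Matrix"
begin

text \<open>Matrices are JNF matrices; indices are 0-based (paper index k corresponds to k-1).\<close>

inductive_set gen_subgroup :: "nat \<Rightarrow> 'a::comm_ring_1 mat set \<Rightarrow> 'a mat set"
  for m :: nat and S :: "'a mat set" where
  gen_one: "1\<^sub>m m \<in> gen_subgroup m S"
| gen_gen: "A \<in> S \<Longrightarrow> A \<in> gen_subgroup m S"
| gen_mult: "A \<in> gen_subgroup m S \<Longrightarrow> B \<in> gen_subgroup m S \<Longrightarrow> A * B \<in> gen_subgroup m S"
| gen_inv: "A \<in> gen_subgroup m S \<Longrightarrow> B \<in> carrier_mat m m \<Longrightarrow> A * B = 1\<^sub>m m
            \<Longrightarrow> B \<in> gen_subgroup m S"

definition mat_unit :: "nat \<Rightarrow> nat \<Rightarrow> nat \<Rightarrow> 'a::{zero,one} mat" where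
  "mat_unit m i j = mat m m (\<lambda>(k,l). if k = i \<and> l = j then 1 else 0)"

definition elem_mat :: "nat \<Rightarrow> nat \<Rightarrow> nat \<Rightarrow> 'a::comm_ring_1 \<Rightarrow> 'a mat" where
  "elem_mat m i j c = 1\<^sub>m m + c \<cdot>\<^sub>m mat_unit m i j"

definition E_mat :: "nat \<Rightarrow> 'a::comm_ring_1 mat set" where
  "E_mat m = gen_subgroup m {elem_mat m i j c | i j c. i < m \<and> j < m \<and> i \<noteq> j}"

definition psi :: "nat \<Rightarrow> 'a::comm_ring_1 mat" where
  "psi n = mat (2*n) (2*n) (\<lambda>(i,j). if even i \<and> j = i + 1 then 1
                                   else if odd i \<and> i = j + 1 then -1 else 0)"

definition mat_inv :: "'a::comm_ring_1 mat \<Rightarrow> 'a mat" where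
  "mat_inv A = (THE B. B \<in> carrier_mat (dim_row A) (dim_row A) \<and> A * B = 1\<^sub>m (dim_row A))"

definition col_of :: "'a vec \<Rightarrow> 'a mat" where
  "col_of v = mat (dim_vec v) 1 (\<lambda>(i,_). v $ i)"
definition row_of :: "'a vec \<Rightarrow> 'a mat" where
  "row_of v = mat 1 (dim_vec v) (\<lambda>(_,j). v $ j)"

text \<open>Block decomposition of a (2n x 2n) alternating phi:
  phi = [[0, -c],[c^t, nu]], phi^-1 = [[0, d],[-d^t, mu]].\<close>
definition phi_c :: "'a::comm_ring_1 mat \<Rightarrow> 'a vec" where
  "phi_c phi = vec (dim_row phi - 1) (\<lambda>j. - phi $$ (0, j+1))"
definition phi_nu :: "'a::comm_ring_1 mat \<Rightarrow> 'a mat" where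
  "phi_nu phi = mat (dim_row phi - 1) (dim_row phi - 1) (\<lambda>(i,j). phi $$ (i+1, j+1))"
definition phi_d :: "'a::comm_ring_1 mat \<Rightarrow> 'a vec" where
  "phi_d phi = vec (dim_row phi - 1) (\<lambda>j. mat_inv phi $$ (0, j+1))"
definition phi_mu :: "'a::comm_ring_1 mat \<Rightarrow> 'a mat" where
  "phi_mu phi = mat (dim_row phi - 1) (dim_row phi - 1) (\<lambda>(i,j). mat_inv phi $$ (i+1, j+1))"

definition alpha_phi :: "'a::comm_ring_1 mat \<Rightarrow> 'a vec \<Rightarrow> 'a mat" where
  "alpha_phi phi v = 1\<^sub>m (dim_row phi - 1) + col_of (phi_d phi) * row_of v * phi_nu phi"
definition beta_phi :: "'a::comm_ring_1 mat \<Rightarrow> 'a vec \<Rightarrow> 'a mat" where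
  "beta_phi phi v = 1\<^sub>m (dim_row phi - 1) + phi_mu phi * col_of v * row_of (phi_c phi)"

definition E_phi :: "'a::comm_ring_1 mat \<Rightarrow> 'a mat set" where
  "E_phi phi = gen_subgroup (dim_row phi - 1)
     ({alpha_phi phi v | v. v \<in> carrier_vec (dim_row phi - 1)}
      \<union> {beta_phi phi v | v. v \<in> carrier_vec (dim_row phi - 1)})"

end

theory Submission
  imports Defs
begin

text \<open>Since \<psi>\<psi> = -1, we get c = d = -e_1 and \<mu> = -\<nu>, so \<alpha>(v) is the identity plus
  the first row -v\<nu> and \<beta>(v) is the identity plus the first column \<nu>v. The first row and column
  of \<nu> vanish, so these are products of elementary matrices E_1j and E_i1 respectively.
  Conversely, off its first row and column \<nu> is a signed permutation matrix, so multiples of unit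
  vectors v turn \<alpha>(v) and \<beta>(v) into every E_1j(\<lambda>) and E_i1(\<lambda>) with i, j > 1; the remaining
  generators are commutators [E_i1(\<lambda>), E_1j(1)] = E_ij(\<lambda>).\<close>

lemma if_zero_mult_if_zero:
  "(if P then a else 0) * (if Q then b else 0) = (if P \<and> Q then a * b else (0::'a::comm_ring_1))"
  by auto

lemma sum_if_eq_mult:
  "(\<Sum>t<(m::nat). (if t = k then a else 0) * g t) = (if k < m then a * g k else (0::'a::comm_ring_1))"
proof -
  have "(\<Sum>t<m. (if t = k then a else 0) * g t) = (\<Sum>t<m. if t = k then a * g k else 0)"
    by (rule sum.cong) auto
  then show ?thesis by simp
qed

lemma sum_smult_unit_vec_left:
  assumes "k < m"
  shows "(\<Sum>t<m. (a \<cdot>\<^sub>v unit_vec m k) $ t * g t) = a * (g k :: 'a::comm_ring_1)"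
proof -
  have "(\<Sum>t<m. (a \<cdot>\<^sub>v unit_vec m k) $ t * g t) = (\<Sum>t<m. (if t = k then a else 0) * g t)"
    by (rule sum.cong) (auto simp: unit_vec_def)
  then show ?thesis using assms by (simp add: sum_if_eq_mult)
qed

lemma sum_smult_unit_vec_right:
  "k < m \<Longrightarrow> (\<Sum>t<m. g t * (a \<cdot>\<^sub>v unit_vec m k) $ t) = (g k :: 'a::comm_ring_1) * a"
  using sum_smult_unit_vec_left[of k m a g] by (simp add: mult.commute)

lemma mat_inv_eqI:
  assumes "A \<in> carrier_mat n n" "B \<in> carrier_mat n n" "A * B = 1\<^sub>m n" "B * A = 1\<^sub>m n"
  shows "mat_inv A = B"
  unfolding mat_inv_def
proof (rule the_equality)
  show "B \<in> carrier_mat (dim_row A) (dim_row A) \<and> A * B = 1\<^sub>m (dim_row A)"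
    using assms by simp
next
  fix C assume C: "C \<in> carrier_mat (dim_row A) (dim_row A) \<and> A * C = 1\<^sub>m (dim_row A)"
  then have "C = (B * A) * C" using assms by (simp add: left_mult_one_mat[of C n n])
  also have "\<dots> = B * (A * C)" by (rule assoc_mult_mat) (use assms C in auto)
  also have "\<dots> = B" using assms C by simp
  finally show "C = B" .
qed

definition id_plus :: "nat \<Rightarrow> (nat \<Rightarrow> nat \<Rightarrow> 'a::comm_ring_1) \<Rightarrow> 'a mat" where
  "id_plus m F = mat m m (\<lambda>(r,s). (if r = s then 1 else 0) + F r s)"

lemma id_plus_cong: "(\<And>r s. r < m \<Longrightarrow> s < m \<Longrightarrow> F r s = G r s) \<Longrightarrow> id_plus m F = id_plus m G"
  unfolding id_plus_def by (rule eq_matI) auto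

lemma id_plus_zero: "id_plus m (\<lambda>_ _. 0) = 1\<^sub>m m"
  unfolding id_plus_def by (rule eq_matI) auto

lemma id_plus_mult:
  "id_plus m F * id_plus m G = id_plus m (\<lambda>r s. F r s + G r s + (\<Sum>t<m. F r t * G t s))"
  (is "_ = id_plus m ?H")
proof (rule eq_matI)
  fix r s assume "r < dim_row (id_plus m ?H)" and "s < dim_col (id_plus m ?H)"
  then have rs: "r < m" "s < m" by (auto simp: id_plus_def)
  have expand: "((if r = t then 1 else 0) + F r t) * ((if t = s then 1 else 0) + G t s)
     = (if t = r then (if r = s then 1 else 0) else 0) + (if t = r then G r s else 0)
       + (if t = s then F r s else 0) + F r t * G t s" for t
    by (auto simp: algebra_simps)
  have "(id_plus m F * id_plus m G) $$ (r, s)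
      = (\<Sum>t<m. ((if r = t then 1 else 0) + F r t) * ((if t = s then 1 else 0) + G t s))"
    using rs by (simp add: id_plus_def scalar_prod_def lessThan_atLeast0)
  also have "\<dots> = F r s + G r s + (\<Sum>t<m. F r t * G t s) + (if r = s then 1 else 0)"
    unfolding expand using rs by (simp add: sum.distrib)
  finally show "(id_plus m F * id_plus m G) $$ (r, s) = id_plus m ?H $$ (r, s)"
    using rs by (simp add: id_plus_def algebra_simps)
qed (auto simp: id_plus_def)

lemma elem_mat_id_plus: "elem_mat m i j c = id_plus m (\<lambda>r s. if r = i \<and> s = j then c else 0)"
  unfolding elem_mat_def id_plus_def mat_unit_def by (rule eq_matI) auto

lemma gen_subgroup_mono:
  assumes "S \<subseteq> gen_subgroup m T"
  shows "gen_subgroup m S \<subseteq> gen_subgroup m T"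
proof
  fix A assume "A \<in> gen_subgroup m S"
  then show "A \<in> gen_subgroup m T"
    by induction (use assms in \<open>auto intro: gen_subgroup.intros\<close>)
qed

lemma gen_subgroup_eqI:
  "S \<subseteq> gen_subgroup m T \<Longrightarrow> T \<subseteq> gen_subgroup m S \<Longrightarrow> gen_subgroup m S = gen_subgroup m T"
  by (simp add: gen_subgroup_mono subset_antisym)

lemma elem_mat_in_E_mat: "i < m \<Longrightarrow> j < m \<Longrightarrow> i \<noteq> j \<Longrightarrow> elem_mat m i j c \<in> E_mat m"
  unfolding E_mat_def by (rule gen_gen) blast

lemma E_mat_mult: "A \<in> E_mat m \<Longrightarrow> B \<in> E_mat m \<Longrightarrow> A * B \<in> E_mat m"
  unfolding E_mat_def by (rule gen_mult)

lemma alpha_phi_in_E_phi: "v \<in> carrier_vec (dim_row \<phi> - 1) \<Longrightarrow> alpha_phi \<phi> v \<in> E_phi \<phi>"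
  unfolding E_phi_def by (rule gen_gen) blast

lemma beta_phi_in_E_phi: "v \<in> carrier_vec (dim_row \<phi> - 1) \<Longrightarrow> beta_phi \<phi> v \<in> E_phi \<phi>"
  unfolding E_phi_def by (rule gen_gen) blast

lemma E_phi_mult: "A \<in> E_phi \<phi> \<Longrightarrow> B \<in> E_phi \<phi> \<Longrightarrow> A * B \<in> E_phi \<phi>"
  unfolding E_phi_def by (rule gen_mult)

lemma row_in_E_mat:
  assumes "i < m" and "f i = 0"
  shows "id_plus m (\<lambda>r s. if r = i then f s else 0) \<in> E_mat m"
proof -
  have prefix: "id_plus m (\<lambda>r s. if r = i \<and> s < k then f s else 0) \<in> E_mat m" if "k \<le> m" for k
    using that
  proof (induction k)
    case 0
    show ?case by (simp add: id_plus_zero E_mat_def gen_one)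
  next
    case (Suc k)
    then have IH: "id_plus m (\<lambda>r s. if r = i \<and> s < k then f s else 0) \<in> E_mat m" by simp
    show ?case
    proof (cases "k = i")
      case True
      have "id_plus m (\<lambda>r s. if r = i \<and> s < Suc k then f s else 0)
          = id_plus m (\<lambda>r s. if r = i \<and> s < k then f s else 0)"
        by (rule id_plus_cong) (use True \<open>f i = 0\<close> in \<open>auto simp: less_Suc_eq\<close>)
      with IH show ?thesis by simp
    next
      case False
      have vanish: "(if r = i \<and> t < k then f t else 0) * (if t = i \<and> s = k then f k else 0) = 0"
        for r s t using \<open>f i = 0\<close> by auto
      have step: "id_plus m (\<lambda>r s. if r = i \<and> s < k then f s else 0) * elem_mat m i k (f k)
          = id_plus m (\<lambda>r s. if r = i \<and> s < Suc k then f s else 0)"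
        unfolding elem_mat_id_plus id_plus_mult vanish sum.neutral_const
        by (rule id_plus_cong) (use False in \<open>auto simp: less_Suc_eq\<close>)
      have elem: "elem_mat m i k (f k) \<in> E_mat m"
        using False Suc.prems \<open>i < m\<close> by (intro elem_mat_in_E_mat) auto
      show ?thesis using E_mat_mult[OF IH elem] unfolding step .
    qed
  qed
  have "id_plus m (\<lambda>r s. if r = i \<and> s < m then f s else 0)
      = id_plus m (\<lambda>r s. if r = i then f s else 0)"
    by (rule id_plus_cong) auto
  with prefix[OF order_refl] show ?thesis by simp
qed

lemma col_in_E_mat:
  assumes "j < m" and "f j = 0"
  shows "id_plus m (\<lambda>r s. if s = j then f r else 0) \<in> E_mat m"
proof -
  have prefix: "id_plus m (\<lambda>r s. if s = j \<and> r < k then f r else 0) \<in> E_mat m" if "k \<le> m" for k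
    using that
  proof (induction k)
    case 0
    show ?case by (simp add: id_plus_zero E_mat_def gen_one)
  next
    case (Suc k)
    then have IH: "id_plus m (\<lambda>r s. if s = j \<and> r < k then f r else 0) \<in> E_mat m" by simp
    show ?case
    proof (cases "k = j")
      case True
      have "id_plus m (\<lambda>r s. if s = j \<and> r < Suc k then f r else 0)
          = id_plus m (\<lambda>r s. if s = j \<and> r < k then f r else 0)"
        by (rule id_plus_cong) (use True \<open>f j = 0\<close> in \<open>auto simp: less_Suc_eq\<close>)
      with IH show ?thesis by simp
    next
      case False
      have vanish: "(if t = j \<and> r < k then f r else 0) * (if t = k \<and> s = j then f k else 0) = 0"
        for r s t using False by auto
      have step: "id_plus m (\<lambda>r s. if s = j \<and> r < k then f r else 0) * elem_mat m k j (f k)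
          = id_plus m (\<lambda>r s. if s = j \<and> r < Suc k then f r else 0)"
        unfolding elem_mat_id_plus id_plus_mult vanish sum.neutral_const
        by (rule id_plus_cong) (use False in \<open>auto simp: less_Suc_eq\<close>)
      have elem: "elem_mat m k j (f k) \<in> E_mat m"
        using False Suc.prems \<open>j < m\<close> by (intro elem_mat_in_E_mat) auto
      show ?thesis using E_mat_mult[OF IH elem] unfolding step .
    qed
  qed
  have "id_plus m (\<lambda>r s. if s = j \<and> r < m then f r else 0)
      = id_plus m (\<lambda>r s. if s = j then f r else 0)"
    by (rule id_plus_cong) auto
  with prefix[OF order_refl] show ?thesis by simp
qed

lemma elem_mat_commutator:
  fixes a :: "'a::comm_ring_1"
  assumes "i < m" "j < m" "k < m" "i \<noteq> k" "j \<noteq> k" "i \<noteq> j"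
  shows "elem_mat m i k a * elem_mat m k j 1 * elem_mat m i k (-a) * elem_mat m k j (-1)
       = elem_mat m i j a"
proof -
  have "elem_mat m i k a * elem_mat m k j 1 = id_plus m (\<lambda>r s. (if r = i \<and> s = k then a else 0)
      + (if r = k \<and> s = j then 1 else 0) + (if r = i \<and> s = j then a else 0))"
    unfolding elem_mat_id_plus id_plus_mult
    by (rule id_plus_cong) (use assms in \<open>auto simp: if_zero_mult_if_zero\<close>)
  also have "\<dots> * elem_mat m i k (-a)
      = id_plus m (\<lambda>r s. (if r = k \<and> s = j then 1 else 0) + (if r = i \<and> s = j then a else 0))"
    unfolding elem_mat_id_plus id_plus_mult
    by (rule id_plus_cong)
      (use assms in \<open>auto simp: if_zero_mult_if_zero sum.distrib distrib_right cong: conj_cong\<close>)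
  also have "\<dots> * elem_mat m k j (-1) = elem_mat m i j a"
    unfolding elem_mat_id_plus id_plus_mult
    by (rule id_plus_cong)
      (use assms in \<open>auto simp: if_zero_mult_if_zero sum.distrib distrib_right cong: conj_cong\<close>)
  finally show ?thesis .
qed

definition psi_partner :: "nat \<Rightarrow> nat" where
  "psi_partner i = (if even i then i + 1 else i - 1)"

definition psi_sign :: "nat \<Rightarrow> 'a::comm_ring_1" where
  "psi_sign i = (if even i then 1 else -1)"

lemma psi_partner_less: "i < 2*n \<Longrightarrow> psi_partner i < 2*n"
  unfolding psi_partner_def by (auto elim!: evenE)

lemma psi_partner_partner[simp]: "psi_partner (psi_partner i) = i"
  unfolding psi_partner_def by (auto elim!: oddE)

lemma psi_partner_eq_iff[simp]: "psi_partner i = psi_partner j \<longleftrightarrow> i = j"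
  by (metis psi_partner_partner)

lemma psi_partner_Suc_bounds: "0 < j \<Longrightarrow> j < 2*n-1 \<Longrightarrow> 0 < psi_partner (Suc j) \<and> psi_partner (Suc j) < 2*n"
  using psi_partner_less[of "Suc j" n] by (auto simp: psi_partner_def)

lemma psi_sign_partner[simp]: "psi_sign (psi_partner i) = - (psi_sign i :: 'a::comm_ring_1)"
  unfolding psi_partner_def psi_sign_def by (auto elim!: oddE)

lemma psi_sign_square[simp]: "psi_sign i * psi_sign i = (1::'a::comm_ring_1)"
  unfolding psi_sign_def by auto

lemma dim_psi[simp]: "dim_row (psi n) = 2*n" "dim_col (psi n) = 2*n"
  unfolding psi_def by auto

lemma psi_carrier: "psi n \<in> carrier_mat (2*n) (2*n)"
  unfolding psi_def by (rule mat_carrier)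

lemma index_psi:
  "i < 2*n \<Longrightarrow> j < 2*n \<Longrightarrow> (psi n :: 'a::comm_ring_1 mat) $$ (i,j)
     = (if j = psi_partner i then psi_sign i else 0)"
  unfolding psi_def psi_partner_def psi_sign_def by (auto elim: oddE)

lemma psi_square: "(psi n :: 'a::comm_ring_1 mat) * psi n = - 1\<^sub>m (2*n)"
proof (rule eq_matI)
  fix r s assume "r < dim_row (- 1\<^sub>m (2*n) :: 'a mat)" "s < dim_col (- 1\<^sub>m (2*n) :: 'a mat)"
  then have rs: "r < 2*n" "s < 2*n" by auto
  have "(psi n * psi n :: 'a mat) $$ (r,s)
      = (\<Sum>t<2*n. (if t = psi_partner r then psi_sign r else 0) * psi n $$ (t, s))"
    using rs by (auto simp: scalar_prod_def lessThan_atLeast0 index_psi intro!: sum.cong)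
  also have "\<dots> = psi_sign r * psi n $$ (psi_partner r, s)"
    using psi_partner_less[OF rs(1)] by (simp add: sum_if_eq_mult)
  also have "\<dots> = (if s = r then -1 else 0)"
    using rs psi_partner_less[OF rs(1)] by (simp add: index_psi)
  finally show "(psi n * psi n :: 'a mat) $$ (r,s) = (- 1\<^sub>m (2*n) :: 'a mat) $$ (r,s)"
    using rs by auto
qed auto

lemma mat_inv_psi: "mat_inv (psi n :: 'a::comm_ring_1 mat) = - psi n"
proof (rule mat_inv_eqI)
  show "psi n \<in> carrier_mat (2*n) (2*n)" "- psi n \<in> carrier_mat (2*n) (2*n)"
    using psi_carrier by auto
  show "psi n * - psi n = (1\<^sub>m (2*n) :: 'a mat)" "- psi n * psi n = (1\<^sub>m (2*n) :: 'a mat)"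
    using psi_carrier[of n] by (simp_all add: psi_square)
qed

lemma index_psi_first_row:
  "0 < n \<Longrightarrow> j < 2*n \<Longrightarrow> (psi n :: 'a::comm_ring_1 mat) $$ (0, j) = (if j = 1 then 1 else 0)"
  unfolding psi_def by auto

lemma index_psi_second_col: "Suc k < 2*n \<Longrightarrow> (psi n :: 'a::comm_ring_1 mat) $$ (Suc k, Suc 0) = 0"
  unfolding psi_def by auto

lemma index_psi_second_row: "Suc k < 2*n \<Longrightarrow> (psi n :: 'a::comm_ring_1 mat) $$ (Suc 0, Suc k) = 0"
  unfolding psi_def by auto

lemma alpha_phi_psi:
  assumes n: "0 < n" and v: "v \<in> carrier_vec (2*n-1)"
  shows "alpha_phi (psi n :: 'a::comm_ring_1 mat) v
     = id_plus (2*n-1) (\<lambda>r s. if r = 0 then - (\<Sum>k<2*n-1. v$k * psi n $$ (k+1, s+1)) else 0)"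
    (is "_ = id_plus _ ?F")
proof (rule eq_matI)
  fix r s assume "r < dim_row (id_plus (2*n-1) ?F)" "s < dim_col (id_plus (2*n-1) ?F)"
  then have rs: "r < 2*n-1" "s < 2*n-1" by (auto simp: id_plus_def)
  have d: "phi_d (psi n :: 'a mat) $ r = (if r = 0 then -1 else 0)"
    using rs n by (simp add: phi_d_def mat_inv_psi index_psi_first_row)
  have "(col_of (phi_d (psi n)) * row_of v * phi_nu (psi n :: 'a mat)) $$ (r,s)
     = (\<Sum>k<2*n-1. (phi_d (psi n) $ r * v $ k) * psi n $$ (k+1, s+1))"
    using rs v by (simp add: col_of_def row_of_def phi_d_def phi_nu_def scalar_prod_def lessThan_atLeast0)
  also have "\<dots> = ?F r s"
    unfolding d by (simp add: sum_negf)
  finally show "alpha_phi (psi n) v $$ (r,s) = id_plus (2*n-1) ?F $$ (r,s)"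
    using rs v by (simp add: alpha_phi_def id_plus_def col_of_def row_of_def phi_d_def phi_nu_def)
qed (use v in \<open>auto simp: alpha_phi_def id_plus_def col_of_def row_of_def phi_d_def phi_nu_def\<close>)

lemma beta_phi_psi:
  assumes n: "0 < n" and v: "v \<in> carrier_vec (2*n-1)"
  shows "beta_phi (psi n :: 'a::comm_ring_1 mat) v
     = id_plus (2*n-1) (\<lambda>r s. if s = 0 then (\<Sum>k<2*n-1. psi n $$ (r+1, k+1) * v$k) else 0)"
    (is "_ = id_plus _ ?F")
proof (rule eq_matI)
  fix r s assume "r < dim_row (id_plus (2*n-1) ?F)" "s < dim_col (id_plus (2*n-1) ?F)"
  then have rs: "r < 2*n-1" "s < 2*n-1" by (auto simp: id_plus_def)
  have c: "phi_c (psi n :: 'a mat) $ s = (if s = 0 then -1 else 0)"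
    using rs n by (simp add: phi_c_def index_psi_first_row)
  have "(phi_mu (psi n) * col_of v * row_of (phi_c (psi n :: 'a mat))) $$ (r,s)
     = (\<Sum>k<2*n-1. - (psi n $$ (r+1, k+1) * v $ k)) * phi_c (psi n) $ s"
    using rs v by (simp add: col_of_def row_of_def phi_mu_def phi_c_def scalar_prod_def
        lessThan_atLeast0 mat_inv_psi sum_distrib_right)
  also have "\<dots> = ?F r s"
    unfolding c by (simp add: sum_negf)
  finally show "beta_phi (psi n) v $$ (r,s) = id_plus (2*n-1) ?F $$ (r,s)"
    using rs v by (simp add: beta_phi_def id_plus_def col_of_def row_of_def phi_c_def phi_mu_def)
qed (use v in \<open>auto simp: beta_phi_def id_plus_def col_of_def row_of_def phi_c_def phi_mu_def\<close>)

lemma alpha_phi_psi_in_E_mat: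
  "0 < n \<Longrightarrow> v \<in> carrier_vec (2*n-1) \<Longrightarrow> alpha_phi (psi n :: 'a::comm_ring_1 mat) v \<in> E_mat (2*n-1)"
  unfolding alpha_phi_psi by (rule row_in_E_mat) (auto simp: index_psi_second_col intro!: sum.neutral)

lemma beta_phi_psi_in_E_mat:
  "0 < n \<Longrightarrow> v \<in> carrier_vec (2*n-1) \<Longrightarrow> beta_phi (psi n :: 'a::comm_ring_1 mat) v \<in> E_mat (2*n-1)"
  unfolding beta_phi_psi by (rule col_in_E_mat) (auto simp: index_psi_second_row intro!: sum.neutral)

lemma elem_mat_first_row_in_E_phi_psi:
  assumes n: "0 < n" and j: "0 < j" "j < 2*n-1"
  shows "elem_mat (2*n-1) 0 j c \<in> E_phi (psi n :: 'a::comm_ring_1 mat)"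
proof -
  define p where "p = psi_partner (Suc j)"
  have p: "0 < p" "p < 2*n" using psi_partner_Suc_bounds[OF j] by (simp_all add: p_def)
  \<comment> \<open>row \<open>p - 1\<close> of \<open>\<nu>\<close> is \<open>-psi_sign (Suc j)\<close> times the unit vector at \<open>j\<close>\<close>
  define v :: "'a vec" where "v = (c * psi_sign (Suc j)) \<cdot>\<^sub>v unit_vec (2*n-1) (p-1)"
  have v: "v \<in> carrier_vec (2*n-1)" by (simp add: v_def)
  have "alpha_phi (psi n) v = elem_mat (2*n-1) 0 j c"
    unfolding alpha_phi_psi[OF n v] elem_mat_id_plus
  proof (rule id_plus_cong)
    fix r s :: nat assume "s < 2*n-1"
    have "(\<Sum>t<2*n-1. v$t * psi n $$ (t+1, s+1)) = c * psi_sign (Suc j) * (psi n :: 'a mat) $$ (p-1+1, s+1)"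
      unfolding v_def by (rule sum_smult_unit_vec_left) (use p in simp)
    also have "\<dots> = (if s = j then - c else 0)"
      using p \<open>s < 2*n-1\<close> by (auto simp: index_psi p_def mult.assoc)
    finally have entry: "(\<Sum>t<2*n-1. v$t * psi n $$ (t+1, s+1)) = (if s = j then - c else 0)" .
    show "(if r = 0 then - (\<Sum>t<2*n-1. v$t * psi n $$ (t+1, s+1)) else 0)
        = (if r = 0 \<and> s = j then c else 0)" unfolding entry by simp
  qed
  then show ?thesis using alpha_phi_in_E_phi[of v "psi n"] v by simp
qed

lemma elem_mat_first_col_in_E_phi_psi:
  assumes n: "0 < n" and i: "0 < i" "i < 2*n-1"
  shows "elem_mat (2*n-1) i 0 c \<in> E_phi (psi n :: 'a::comm_ring_1 mat)"
proof -
  define p where "p = psi_partner (Suc i)"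
  have p: "0 < p" "p < 2*n" using psi_partner_Suc_bounds[OF i] by (simp_all add: p_def)
  \<comment> \<open>column \<open>p - 1\<close> of \<open>\<nu>\<close> is \<open>psi_sign (Suc i)\<close> times the unit vector at \<open>i\<close>\<close>
  define v :: "'a vec" where "v = (psi_sign (Suc i) * c) \<cdot>\<^sub>v unit_vec (2*n-1) (p-1)"
  have v: "v \<in> carrier_vec (2*n-1)" by (simp add: v_def)
  have "beta_phi (psi n) v = elem_mat (2*n-1) i 0 c"
    unfolding beta_phi_psi[OF n v] elem_mat_id_plus
  proof (rule id_plus_cong)
    fix r s :: nat assume "r < 2*n-1"
    have "(\<Sum>t<2*n-1. psi n $$ (r+1, t+1) * v$t) = (psi n :: 'a mat) $$ (r+1, p-1+1) * (psi_sign (Suc i) * c)"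
      unfolding v_def by (rule sum_smult_unit_vec_right) (use p in simp)
    also have "\<dots> = (if r = i then c else 0)"
      using p \<open>r < 2*n-1\<close> by (auto simp: index_psi p_def mult.assoc[symmetric])
    finally have entry: "(\<Sum>t<2*n-1. psi n $$ (r+1, t+1) * v$t) = (if r = i then c else 0)" .
    show "(if s = 0 then (\<Sum>t<2*n-1. psi n $$ (r+1, t+1) * v$t) else 0)
        = (if r = i \<and> s = 0 then c else 0)" unfolding entry by simp
  qed
  then show ?thesis using beta_phi_in_E_phi[of v "psi n"] v by simp
qed

lemma elem_mat_in_E_phi_psi:
  assumes n: "0 < n" and ij: "i < 2*n-1" "j < 2*n-1" "i \<noteq> j"
  shows "elem_mat (2*n-1) i j c \<in> E_phi (psi n :: 'a::comm_ring_1 mat)"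
proof -
  consider "i = 0" | "j = 0" | "i \<noteq> 0" "j \<noteq> 0" by blast
  then show ?thesis
  proof cases
    case 1
    then show ?thesis using elem_mat_first_row_in_E_phi_psi[OF n] ij by simp
  next
    case 2
    then show ?thesis using elem_mat_first_col_in_E_phi_psi[OF n] ij by simp
  next
    case 3
    have "elem_mat (2*n-1) i 0 c * elem_mat (2*n-1) 0 j 1 * elem_mat (2*n-1) i 0 (-c)
        * elem_mat (2*n-1) 0 j (-1) \<in> E_phi (psi n :: 'a mat)"
      using 3 ij n by (intro E_phi_mult elem_mat_first_row_in_E_phi_psi elem_mat_first_col_in_E_phi_psi) auto
    then show ?thesis using elem_mat_commutator[of i "2*n-1" j 0 c] 3 ij by simp
  qed
qed

theorem lemma3p9:
  fixes n :: nat
  assumes "n \<ge> 1"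
  shows "E_phi (psi n :: 'a::comm_ring_1 mat) = E_mat (2*n - 1)"
proof -
  have n: "0 < n" using assms by simp
  have "{alpha_phi (psi n) v |v. v \<in> carrier_vec (2*n-1)} \<union> {beta_phi (psi n) v |v. v \<in> carrier_vec (2*n-1)}
      \<subseteq> E_mat (2*n-1)"
    using alpha_phi_psi_in_E_mat[OF n] beta_phi_psi_in_E_mat[OF n] by blast
  moreover have "{elem_mat (2*n-1) i j c | i j c. i < 2*n-1 \<and> j < 2*n-1 \<and> i \<noteq> j}
      \<subseteq> E_phi (psi n :: 'a mat)"
    using elem_mat_in_E_phi_psi[OF n] by blast
  ultimately show ?thesis
    unfolding E_phi_def E_mat_def dim_psi by (rule gen_subgroup_eqI)
qed

end
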